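(* Let $F:(M_1(c),g_1)\to(M_2,g_2)$ be a Riemannian submersion from a complex space form with $\dim M_1=n=2k$ onto a Riemannian manifold with $\dim M_2=m$ and fibre dimension $r=\dim\mathcal V_p>2$. Let $p\in M_1$, $\Pi\subset\mathcal V_p$ a $2$-plane, $\{V_1,\dots,V_r\}$ an orthonormal basis of $\mathcal V_p$ with $\Pi=\mathrm{span}\{V_1,V_2\}$, and $\{h_1,\dots,h_s\}$ an orthonormal basis of $\mathcal H_p$. Then $$\tau^{\ker F_*}_{\mathcal V}(p)-K^{\ker F_*}_{\mathcal V}(\Pi)\ge\frac12\Big\{\frac c4(r^2-r-2)+\frac{3c}4\big(\|Q\|^2-2\,g_1(V_1,QV_2)^2\big)-\frac{r^2(r-2)}{r-1}\|H\|^2\Big\},$$ with equality if and only if Condition (E) holds at $p$ for $\Pi$.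
   Context: A complex space form $M_1(c)$ is a Kähler manifold $(M_1,J,g_1)$ ($\nabla J=0$) of constant holomorphic sectional curvature $c$, whose curvature is $R(Z_1,Z_2)Z_3=\frac c4\{g_1(Z_2,Z_3)Z_1-g_1(Z_1,Z_3)Z_2\}+\frac c4\{g_1(Z_1,JZ_3)JZ_2-g_1(Z_2,JZ_3)JZ_1+2g_1(Z_1,JZ_2)JZ_3\}$. For a tangent vector $Z$ write $JZ=PZ+QZ$ with $PZ\in\mathcal H$, $QZ\in\mathcal V$, and $\|Q\|^2=\sum_{i,j=1}^r g_1(QV_i,V_j)^2$. Let $(M_1,g_1)$, $(M_2,g_2)$ be Riemannian manifolds, $\dim M_1=n$, $\dim M_2=m$, and $F:M_1\to M_2$ a Riemannian submersion (a surjective smooth map whose differential $F_{*p}$ is surjective at every $p$ and preserves the length of horizontal vectors). Write $\mathcal V=\ker F_*$ (vertical distribution), $\mathcal H=(\ker F_* )^\perp$ (horizontal distribution), $r=\dim\mathcal V_p=n-m$, $s=\dim\mathcal H_p=m$; $v,h$ denote the orthogonal projections onto $\mathcal V,\mathcal H$, and $\nabla$ the Levi-Civita connection of $g_1$. O'Neill's tensor: $\mathcal T_EF=h\nabla_{vE}vF+v\nabla_{vE}hF$. Curvature convention: $R^{M_1}(X,Y,Z,W)=g_1(R^{M_1}(X,Y)Z,W)$, normalized so that $R^{M_1}(X,Y,Y,X)$ is the sectional curvature of the plane spanned by orthonormal $X,Y$. The curvature $R^{\ker F_*}$ of the fibres is related to $R^{M_1}$ (as used in the paper) by: for vertical $F_1,\dots,F_4$,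 $R^{M_1}(F_1,F_2,F_3,F_4)=R^{\ker F_*}(F_1,F_2,F_3,F_4)+g_1(\mathcal T_{F_1}F_4,\mathcal T_{F_2}F_3)-g_1(\mathcal T_{F_2}F_4,\mathcal T_{F_1}F_3)$. With the chosen orthonormal bases at $p$: $(\mathcal T^{\mathcal H})^\ell_{ij}=g_1(\mathcal T_{V_i}V_j,h_\ell)$; the mean curvature vector of the fibres is $H=\frac1r\sum_{i=1}^r\mathcal T_{V_i}V_i$; $\tau^{\ker F_*}_{\mathcal V}(p)=\frac12\sum_{i,j=1}^rR^{\ker F_*}(V_i,V_j,V_j,V_i)$, $K^{\ker F_*}_{\mathcal V}(\Pi)=R^{\ker F_*}(V_1,V_2,V_2,V_1)$ for $\Pi=\mathrm{span}\{V_1,V_2\}$. Condition (E) at $p$ for $\Pi$: there exist orthonormal bases $\{V_1,\dots,V_r\}$ of $\mathcal V_p$ with $\Pi=\mathrm{span}\{V_1,V_2\}$ and $\{h_1,\dots,h_s\}$ of $\mathcal H_p$ with $h_1=H(p)/\|H(p)\|$ if $H(p)\neq0$ ($h_1$ arbitrary if $H(p)=0$), such that: $(\mathcal T^{\mathcal H})^\ell_{1j}=(\mathcal T^{\mathcal H})^\ell_{2j}=0$ for $j>2$, $\ell=1,\dots,s$; $(\mathcal T^{\mathcal H})^1_{ij}=0$ for $i\ne j$, $i,j>2$; $(\mathcal T^{\mathcal H})^\ell_{ij}=0$ for $i,j>2$, $\ell=2,\dots,s$; $(\mathcal T^{\mathcal H})^\ell_{11}+(\mathcal T^{\mathcal H})^\ell_{22}=0$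 for $\ell=2,\dots,s$; and $(\mathcal T^{\mathcal H})^1_{11}+(\mathcal T^{\mathcal H})^1_{22}=(\mathcal T^{\mathcal H})^1_{33}=\cdots=(\mathcal T^{\mathcal H})^1_{rr}$. *)

theory Defs
  imports "HOL-Analysis.Analysis"
begin

text \<open>Pointwise model: the tangent space T_p M1 is a finite-dimensional real inner
product space 'a (g1 = inner), Vs is the vertical space V_p, its orthogonal
complement is the horizontal space H_p.\<close>

definition vpart :: "'a::euclidean_space set \<Rightarrow> 'a \<Rightarrow> 'a" where
  "vpart Vs x = (THE w. w \<in> Vs \<and> x - w \<in> orthogonal_comp Vs)"

text \<open>Curvature tensor of a complex space form of constant holomorphic sectional curvature c:
R(Z1,Z2,Z3,Z4) = g1(R(Z1,Z2)Z3, Z4).\<close>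
definition csf_curv :: "real \<Rightarrow> ('a::euclidean_space \<Rightarrow> 'a) \<Rightarrow> 'a \<Rightarrow> 'a \<Rightarrow> 'a \<Rightarrow> 'a \<Rightarrow> real" where
  "csf_curv c J Z1 Z2 Z3 Z4 =
     inner ((c/4) *\<^sub>R (inner Z2 Z3 *\<^sub>R Z1 - inner Z1 Z3 *\<^sub>R Z2)
          + (c/4) *\<^sub>R (inner Z1 (J Z3) *\<^sub>R J Z2 - inner Z2 (J Z3) *\<^sub>R J Z1
                       + (2 * inner Z1 (J Z2)) *\<^sub>R J Z3)) Z4"

definition onb :: "(nat \<Rightarrow> 'a::euclidean_space) \<Rightarrow> nat \<Rightarrow> 'a set \<Rightarrow> bool" where
  "onb B k S \<longleftrightarrow> (\<forall>i\<in>{1..k}. B i \<in> S)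
     \<and> (\<forall>i\<in>{1..k}. \<forall>j\<in>{1..k}. inner (B i) (B j) = (if i = j then 1 else 0))
     \<and> span (B ` {1..k}) = S"

definition meancurv :: "('a::euclidean_space \<Rightarrow> 'a \<Rightarrow> 'a) \<Rightarrow> (nat \<Rightarrow> 'a) \<Rightarrow> nat \<Rightarrow> 'a" where
  "meancurv T V r = (1 / real r) *\<^sub>R (\<Sum>i\<in>{1..r}. T (V i) (V i))"

definition condE :: "'a::euclidean_space set \<Rightarrow> ('a \<Rightarrow> 'a \<Rightarrow> 'a) \<Rightarrow> nat \<Rightarrow> nat \<Rightarrow> 'a set \<Rightarrow> 'a \<Rightarrow> bool" where
  "condE Vs T r s Pl Hv \<longleftrightarrow>
    (\<exists>Vb hb. onb Vb r Vs \<and> onb hb s (orthogonal_comp Vs) \<and> span {Vb 1, Vb 2} = Pl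
      \<and> (Hv \<noteq> 0 \<longrightarrow> hb 1 = (1 / norm Hv) *\<^sub>R Hv)
      \<and> (let t = (\<lambda>l i j. inner (T (Vb i) (Vb j)) (hb l)) in
          (\<forall>l\<in>{1..s}. \<forall>j\<in>{3..r}. t l 1 j = 0 \<and> t l 2 j = 0)
        \<and> (\<forall>i\<in>{3..r}. \<forall>j\<in>{3..r}. i \<noteq> j \<longrightarrow> t 1 i j = 0)
        \<and> (\<forall>l\<in>{2..s}. \<forall>i\<in>{3..r}. \<forall>j\<in>{3..r}. t l i j = 0)
        \<and> (\<forall>l\<in>{2..s}. t l 1 1 + t l 2 2 = 0)
        \<and> (\<forall>j\<in>{3..r}. t 1 1 1 + t 1 2 2 = t 1 j j)))"

end

theory Submission
  imports Defs
begin

text \<open>By the Gauss equation, the sectional curvature of the fibre on an orthonormal vertical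
pair X, Y is that of M1(c) minus <T(X,X), T(Y,Y)> - |T(X,Y)|^2. Summing over the basis,
2 (tau - K - bound) becomes an expression in the vectors t_ij = T(V_i, V_j) alone, and Chen's
algebraic trick shows that it is a sum of squares: the r - 1 vectors t_11 + t_22, t_33, ..., t_rr
add up to the trace r H, and the expression is their squared deviation from the mean plus the
squares of the off-diagonal t_ij other than t_12. It vanishes iff t_1j = t_2j = 0 and
t_ij = 0 for i /= j > 2, and t_11 + t_22 = t_33 = ... = t_rr. Then t_11 + t_22 is a multiple of H,
so in a horizontal basis starting with H/|H| these are exactly the equations of Condition (E).
Conversely, the expression does not depend on the orthonormal basis adapted to the plane, so it
may be evaluated in the bases that Condition (E) provides.\<close>

lemma onb_in: "onb B k S \<Longrightarrow> i \<in> {1..k} \<Longrightarrow> B i \<in> S"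
  by (simp add: onb_def)

lemma onb_inner:
  "onb B k S \<Longrightarrow> i \<in> {1..k} \<Longrightarrow> j \<in> {1..k}
    \<Longrightarrow> inner (B i) (B j) = (if i = j then 1 else 0)"
  by (simp add: onb_def)

lemma onb_subspace: "onb B k S \<Longrightarrow> subspace S"
  unfolding onb_def by (metis subspace_span)

lemma onb_expansion:
  assumes B: "onb B k S" and x: "x \<in> S"
  shows "x = (\<Sum>i\<in>{1..k}. inner x (B i) *\<^sub>R B i)"
proof (rule vector_eq_dot_span)
  show "x \<in> span (B ` {1..k})" and "(\<Sum>i\<in>{1..k}. inner x (B i) *\<^sub>R B i) \<in> span (B ` {1..k})"
    using B x by (auto simp: onb_def intro: span_sum span_mul span_base)
  fix b assume "b \<in> B ` {1..k}"
  then obtain j where j: "j \<in> {1..k}" "b = B j" by blast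
  have "inner (B j) (\<Sum>i\<in>{1..k}. inner x (B i) *\<^sub>R B i)
      = (\<Sum>i\<in>{1..k}. inner x (B i) * (if j = i then 1 else 0))"
    using onb_inner[OF B j(1)] by (simp add: inner_sum_right)
  also have "\<dots> = inner (B j) x"
    using j(1) by (simp add: if_distrib inner_commute cong: if_cong)
  finally show "inner b x = inner b (\<Sum>i\<in>{1..k}. inner x (B i) *\<^sub>R B i)" using j by simp
qed

lemma onb_parseval:
  assumes B: "onb B k S" and x: "x \<in> S"
  shows "inner x y = (\<Sum>i\<in>{1..k}. inner x (B i) * inner y (B i))"
  by (subst onb_expansion[OF B x]) (simp add: inner_sum_left inner_sum_right inner_commute mult.commute)

lemma onb_eq_0_iff:
  assumes B: "onb B k S" and x: "x \<in> S"
  shows "x = 0 \<longleftrightarrow> (\<forall>i\<in>{1..k}. inner x (B i) = 0)"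
  using onb_expansion[OF B x] by auto

lemma onb_restrict:
  assumes "onb B k S" and "m \<le> k"
  shows "onb B m (span (B ` {1..m}))"
  using assms by (auto simp: onb_def span_base)

lemma onb_if_bij_betw_orthonormal:
  assumes B: "bij_betw B {1..k} A" and orth: "pairwise orthogonal A"
    and unit: "\<And>x. x \<in> A \<Longrightarrow> norm x = 1"
  shows "onb B k (span A)"
proof -
  have "inner (B i) (B j) = (if i = j then 1 else 0)" if ij: "i \<in> {1..k}" "j \<in> {1..k}" for i j
  proof (cases "i = j")
    case True
    then show ?thesis using unit[OF bij_betwE[OF B, rule_format, OF ij(1)]] by (simp add: norm_eq_1)
  next
    case False
    then have "B i \<noteq> B j" using inj_onD[OF bij_betw_imp_inj_on[OF B]] ij by blast
    then have "orthogonal (B i) (B j)"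
      using pairwiseD[OF orth] bij_betwE[OF B] ij by blast
    then show ?thesis using False by (simp add: orthogonal_def)
  qed
  then show ?thesis using bij_betw_imp_surj_on[OF B] bij_betwE[OF B] by (auto simp: onb_def span_base)
qed

lemma onb_exists:
  fixes W :: "'a::euclidean_space set"
  assumes "subspace W"
  obtains B where "onb B (dim W) W"
proof -
  obtain A where A: "pairwise orthogonal A" "\<And>x. x \<in> A \<Longrightarrow> norm x = 1" "independent A"
      "card A = dim W" "span A = W"
    using orthonormal_basis_subspace[OF assms] by metis
  obtain g where "bij_betw g {1..dim W} A"
    using ex_bij_betw_nat_finite_1[OF independent_imp_finite[OF A(3)]] A(4) by metis
  then have "onb g (dim W) (span A)" using A(1,2) by (rule onb_if_bij_betw_orthonormal)
  then show thesis using that A(5) by simp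
qed

lemma onb_exists_first:
  fixes W :: "'a::euclidean_space set"
  assumes W: "subspace W" and u: "u \<in> W" "norm u = 1"
  obtains B where "onb B (dim W) W" "B 1 = u"
proof -
  obtain B0 where B0: "B0 \<subseteq> W \<inter> orthogonal_comp {u}" "pairwise orthogonal B0"
      "\<And>x. x \<in> B0 \<Longrightarrow> norm x = 1" "span B0 = W \<inter> orthogonal_comp {u}"
    using orthonormal_basis_subspace[of "W \<inter> orthogonal_comp {u}"]
      subspace_inter[OF W subspace_orthogonal_comp] by metis
  define A where "A = insert u B0"
  have orth: "pairwise orthogonal A"
    using B0(1,2) by (auto simp: A_def pairwise_insert orthogonal_comp_def orthogonal_commute)
  have unit: "\<And>x. x \<in> A \<Longrightarrow> norm x = 1" using B0(3) u(2) by (auto simp: A_def)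
  have span: "span A = W"
  proof
    show "span A \<subseteq> W" using B0(1) u(1) W by (intro span_minimal) (auto simp: A_def)
    show "W \<subseteq> span A"
    proof
      fix x assume "x \<in> W"
      then have "x - inner x u *\<^sub>R u \<in> span B0"
        using u W B0(4)
        by (auto simp: orthogonal_comp_def orthogonal_def inner_diff_right inner_commute norm_eq_1
            intro: subspace_diff subspace_scale)
      then show "x \<in> span A" unfolding A_def span_breakdown_eq by blast
    qed
  qed
  have indep: "independent A" using orth unit by (intro pairwise_orthogonal_independent) force+
  then have fin: "finite A" by (rule independent_imp_finite)
  have card: "card A = dim W" using dim_eq_card_independent[OF indep] dim_span[of A] span by simp
  obtain g where g: "bij_betw g {1..dim W} A"
    using ex_bij_betw_nat_finite_1[OF fin] card by metis
  define i0 where "i0 = inv_into {1..dim W} g u"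
  have "u \<in> A" by (simp add: A_def)
  then have i0: "i0 \<in> {1..dim W}" "g i0 = u"
    using g by (auto simp: i0_def bij_betw_def inv_into_into f_inv_into_f)
  have "bij_betw (g \<circ> Transposition.transpose 1 i0) {1..dim W} A"
    using i0(1) by (intro bij_betw_trans[OF _ g]) simp
  then have "onb (g \<circ> Transposition.transpose 1 i0) (dim W) (span A)"
    using orth unit by (rule onb_if_bij_betw_orthonormal)
  then show thesis using that i0(2) span by simp
qed

lemma onb_exists_first_direction:
  fixes W :: "'a::euclidean_space set"
  assumes W: "subspace W" and u: "u \<in> W"
  obtains B where "onb B (dim W) W" "u \<noteq> 0 \<longrightarrow> B 1 = (1 / norm u) *\<^sub>R u"
proof (cases "u = 0")
  case True
  then show thesis using onb_exists[OF W] that by metis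
next
  case False
  have "(1 / norm u) *\<^sub>R u \<in> W" "norm ((1 / norm u) *\<^sub>R u) = 1"
    using W u False by (simp_all add: subspace_scale)
  then show thesis using onb_exists_first[OF W] that by metis
qed

lemma sum_power2_linear_onb_eq:
  fixes g :: "'a::euclidean_space \<Rightarrow> real"
  assumes W: "onb W k S" and V: "onb V k S" and g: "linear g"
  shows "(\<Sum>i\<in>{1..k}. (g (W i))\<^sup>2) = (\<Sum>i\<in>{1..k}. (g (V i))\<^sup>2)"
proof -
  define y where "y = (\<Sum>j\<in>{1..k}. g (V j) *\<^sub>R V j)"
  have yS: "y \<in> S" unfolding y_def
    using onb_subspace[OF V] onb_in[OF V] by (intro subspace_sum subspace_scale) auto
  have g_inner: "g x = inner x y" if "x \<in> S" for x
    by (subst onb_expansion[OF V that])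
      (simp add: y_def linear_sum[OF g] linear_scale[OF g] inner_sum_right mult.commute)
  have "(\<Sum>i\<in>{1..k}. (g (W i))\<^sup>2) = inner y y"
    using onb_parseval[OF W yS, of y] g_inner onb_in[OF W]
    by (simp add: power2_eq_square inner_commute)
  also have "\<dots> = (\<Sum>i\<in>{1..k}. (g (V i))\<^sup>2)"
    using onb_parseval[OF V yS, of y] g_inner onb_in[OF V]
    by (simp add: power2_eq_square inner_commute)
  finally show ?thesis .
qed

lemma sum_norm_power2_linear_onb_eq:
  fixes f :: "'a::euclidean_space \<Rightarrow> 'b::euclidean_space"
  assumes W: "onb W k S" and V: "onb V k S" and f: "linear f"
  shows "(\<Sum>i\<in>{1..k}. (norm (f (W i)))\<^sup>2) = (\<Sum>i\<in>{1..k}. (norm (f (V i)))\<^sup>2)"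
proof -
  have coord: "linear (\<lambda>x. inner (f x) b)" for b
    using f by (simp add: linear_iff inner_add_left)
  have norm_coords: "(norm z)\<^sup>2 = (\<Sum>b\<in>Basis. (inner z b)\<^sup>2)" for z :: 'b
    unfolding power2_norm_eq_inner by (subst euclidean_inner) (simp add: power2_eq_square)
  show ?thesis
    using sum_power2_linear_onb_eq[OF W V coord]
    by (simp add: norm_coords sum.swap[of _ Basis])
qed

lemma sum_bilinear_diag_onb_eq:
  assumes W: "onb W k S" and V: "onb V k S" and T: "bilinear T"
  shows "(\<Sum>i\<in>{1..k}. T (W i) (W i)) = (\<Sum>i\<in>{1..k}. T (V i) (V i))"
proof -
  have l1: "linear (\<lambda>x. T x y)" and l2: "linear (T y)" for y
    using T by (simp_all add: bilinear_def)
  have "(\<Sum>i\<in>{1..k}. T (W i) (W i)) = (\<Sum>i\<in>{1..k}. T (W i) (\<Sum>j\<in>{1..k}. inner (W i) (V j) *\<^sub>R V j))"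
    using onb_expansion[OF V] onb_in[OF W] by (intro sum.cong) auto
  also have "\<dots> = (\<Sum>j\<in>{1..k}. \<Sum>i\<in>{1..k}. inner (V j) (W i) *\<^sub>R T (W i) (V j))"
    by (simp add: linear_sum[OF l2] linear_scale[OF l2] inner_commute) (rule sum.swap)
  also have "\<dots> = (\<Sum>j\<in>{1..k}. T (\<Sum>i\<in>{1..k}. inner (V j) (W i) *\<^sub>R W i) (V j))"
    by (simp add: linear_sum[OF l1] linear_scale[OF l1])
  also have "\<dots> = (\<Sum>j\<in>{1..k}. T (V j) (V j))"
    using onb_expansion[OF W] onb_in[OF V] by (intro sum.cong) auto
  finally show ?thesis .
qed

lemma vpart_orthogonal_decomposition:
  assumes S: "subspace Vs"
  shows "vpart Vs x \<in> Vs \<and> x - vpart Vs x \<in> orthogonal_comp Vs"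
  unfolding vpart_def
proof (rule theI')
  obtain v w where vw: "x = v + w" "v \<in> Vs" "w \<in> orthogonal_comp Vs"
    using subspace_sum_orthogonal_comp[OF S] set_plus_elim by (metis UNIV_I)
  show "\<exists>!v. v \<in> Vs \<and> x - v \<in> orthogonal_comp Vs"
  proof (rule ex1I)
    show "v \<in> Vs \<and> x - v \<in> orthogonal_comp Vs" using vw by simp
    fix v' assume v': "v' \<in> Vs \<and> x - v' \<in> orthogonal_comp Vs"
    have "(x - v) - (x - v') \<in> orthogonal_comp Vs"
      using subspace_diff[OF subspace_orthogonal_comp, of "x - v" Vs "x - v'"] v' vw by simp
    moreover have "v' - v \<in> Vs" using v' vw S by (simp add: subspace_diff)
    ultimately have "v' - v \<in> Vs \<inter> orthogonal_comp Vs" by simp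
    then show "v' = v" using orthogonal_Int_0[OF S] by simp
  qed
qed

lemma inner_vpart:
  assumes "subspace Vs" and "v \<in> Vs"
  shows "inner (vpart Vs x) v = inner x v"
proof -
  have "inner v (x - vpart Vs x) = 0"
    using vpart_orthogonal_decomposition[OF assms(1)] assms(2)
    by (simp add: orthogonal_comp_def orthogonal_def)
  then show ?thesis by (simp add: inner_diff_right inner_commute)
qed

lemma csf_curv_sectional:
  assumes J_sq: "\<forall>x. J (J x) = - x" and J_isom: "\<forall>x y. inner (J x) (J y) = inner x y"
  shows "csf_curv c J x y y x
    = c/4 * (inner y y * inner x x - (inner x y)\<^sup>2) + 3*c/4 * (inner x (J y))\<^sup>2"
proof -
  have "inner y (J y) = - inner (J y) y"
    using J_isom[rule_format, of y "J y"] J_sq by simp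
  then have "inner y (J y) = 0" by (simp add: inner_commute)
  then show ?thesis
    by (simp add: csf_curv_def inner_add_left inner_diff_left inner_commute power2_eq_square algebra_simps)
qed

definition gauss_term :: "('a \<Rightarrow> 'a \<Rightarrow> 'b::real_inner) \<Rightarrow> 'a \<Rightarrow> 'a \<Rightarrow> real" where
  "gauss_term T x y = inner (T x x) (T y y) - (norm (T x y))\<^sup>2"

lemma gauss_term_change_of_basis:
  assumes T: "bilinear T" and sym: "T v w = T w v"
  shows "gauss_term T (a *\<^sub>R v + b *\<^sub>R w) (c *\<^sub>R v + d *\<^sub>R w) = (a*d - b*c)\<^sup>2 * gauss_term T v w"
proof -
  define P Q R where "P = T v v" and "Q = T v w" and "R = T w w"
  have expand: "T (a *\<^sub>R v + b *\<^sub>R w) (c *\<^sub>R v + d *\<^sub>R w)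
      = (a*c) *\<^sub>R P + (a*d + b*c) *\<^sub>R Q + (b*d) *\<^sub>R R"
    for a b c d
    using sym by (simp add: bilinear_ladd[OF T] bilinear_radd[OF T] bilinear_lmul[OF T]
        bilinear_rmul[OF T] P_def Q_def R_def algebra_simps)
  show ?thesis
    unfolding gauss_term_def expand power2_norm_eq_inner
    by (simp add: P_def[symmetric] Q_def[symmetric] R_def[symmetric]
        power2_eq_square)
      (simp add: algebra_simps inner_commute)
qed

lemma gauss_term_onb_eq:
  assumes T: "bilinear T" and sym: "T (V 1) (V 2) = T (V 2) (V 1)"
    and W: "onb W 2 P" and V: "onb V 2 P"
  shows "gauss_term T (W 1) (W 2) = gauss_term T (V 1) (V 2)"
proof -
  have two: "{1..2::nat} = {1, 2}" by auto
  define a b c d where "a = inner (W 1) (V 1)" and "b = inner (W 1) (V 2)"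
    and "c = inner (W 2) (V 1)" and "d = inner (W 2) (V 2)"
  have W_in: "W 1 \<in> P" "W 2 \<in> P" using onb_in[OF W] by auto
  have W1: "W 1 = a *\<^sub>R V 1 + b *\<^sub>R V 2" and W2: "W 2 = c *\<^sub>R V 1 + d *\<^sub>R V 2"
    using onb_expansion[OF V W_in(1), unfolded two] onb_expansion[OF V W_in(2), unfolded two]
    by (simp_all add: a_def b_def c_def d_def)
  have "a * a + b * b = 1" "c * c + d * d = 1" "a * c + b * d = 0"
    using onb_parseval[OF V W_in(1), of "W 1", unfolded two] onb_parseval[OF V W_in(2), of "W 2", unfolded two]
      onb_parseval[OF V W_in(1), of "W 2", unfolded two] onb_inner[OF W, of 1 1] onb_inner[OF W, of 2 2]
      onb_inner[OF W, of 1 2]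
    by (simp_all add: a_def b_def c_def d_def inner_commute)
  moreover have "(a * d - b * c)\<^sup>2 = (a * a + b * b) * (c * c + d * d) - (a * c + b * d)\<^sup>2"
    by (simp add: power2_eq_square algebra_simps)
  ultimately have "(a * d - b * c)\<^sup>2 = 1" by simp
  then show ?thesis
    unfolding W1 W2 using gauss_term_change_of_basis[OF T sym] by simp
qed

lemma sum_gauss_term:
  "(\<Sum>i\<in>I. \<Sum>j\<in>I. gauss_term T (V i) (V j))
    = (norm (\<Sum>i\<in>I. T (V i) (V i)))\<^sup>2 - (\<Sum>i\<in>I. \<Sum>j\<in>I. (norm (T (V i) (V j)))\<^sup>2)"
  by (simp add: gauss_term_def sum_subtractf power2_norm_eq_inner inner_sum_left inner_sum_right)
    (subst sum.swap, simp add: inner_commute)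

section \<open>Chen's algebraic lemma\<close>

lemma sum_norm_power2_deviation_mean:
  fixes x :: "'i \<Rightarrow> 'a::real_inner"
  shows "(\<Sum>i\<in>I. (norm (x i - (1 / real (card I)) *\<^sub>R (\<Sum>j\<in>I. x j)))\<^sup>2)
    = (\<Sum>i\<in>I. (norm (x i))\<^sup>2) - (norm (\<Sum>i\<in>I. x i))\<^sup>2 / real (card I)"
proof -
  define n where "n = real (card I)"
  define s where "s = (\<Sum>i\<in>I. x i)"
  define m where "m = (1 / n) *\<^sub>R s"
  have square: "(norm (z - m))\<^sup>2 = (norm z)\<^sup>2 - 2 * inner z m + (norm m)\<^sup>2" for z
    by (simp add: power2_norm_eq_inner inner_diff_left inner_diff_right inner_commute)
  have "(\<Sum>i\<in>I. (norm (x i - m))\<^sup>2) = (\<Sum>i\<in>I. (norm (x i))\<^sup>2) - 2 * inner s m + n * (norm m)\<^sup>2"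
    by (simp add: square sum_subtractf sum.distrib s_def n_def inner_sum_left sum_distrib_left)
  also have "\<dots> = (\<Sum>i\<in>I. (norm (x i))\<^sup>2) - (norm s)\<^sup>2 / n"
    by (cases "n = 0") (simp_all add: m_def dot_square_norm power_mult_distrib field_simps power2_eq_square)
  finally show ?thesis by (simp add: m_def n_def s_def)
qed

lemma sum_square_symmetric_split:
  fixes f :: "nat \<Rightarrow> nat \<Rightarrow> real"
  assumes r: "2 \<le> r" and sym: "\<forall>i\<in>{1..r}. \<forall>j\<in>{1..r}. f i j = f j i"
  shows "(\<Sum>i\<in>{1..r}. \<Sum>j\<in>{1..r}. f i j)
    = f 1 1 + f 2 2 + 2 * f 1 2 + 2 * (\<Sum>j\<in>{3..r}. f 1 j + f 2 j)
      + (\<Sum>i\<in>{3..r}. f i i) + (\<Sum>i\<in>{3..r}. \<Sum>j\<in>{3..r}. if i = j then 0 else f i j)"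
proof -
  have split: "(\<Sum>i\<in>{1..r}. g i) = g 1 + g 2 + (\<Sum>i\<in>{3..r}. g i)" for g :: "nat \<Rightarrow> real"
  proof -
    have "{1..r} = insert 1 (insert 2 {3..r})" using r by auto
    then show ?thesis by (simp add: add.assoc)
  qed
  have diag: "(\<Sum>j\<in>{3..r}. f i j) = f i i + (\<Sum>j\<in>{3..r}. if i = j then 0 else f i j)"
    if "i \<in> {3..r}" for i
  proof -
    have "(\<Sum>j\<in>{3..r}. f i j) = (\<Sum>j\<in>{3..r}. (if i = j then f i i else 0) + (if i = j then 0 else f i j))"
      by (intro sum.cong) auto
    then show ?thesis using that by (simp add: sum.distrib)
  qed
  have off_diag: "(\<Sum>i\<in>{3..r}. \<Sum>j\<in>{3..r}. f i j)
      = (\<Sum>i\<in>{3..r}. f i i) + (\<Sum>i\<in>{3..r}. \<Sum>j\<in>{3..r}. if i = j then 0 else f i j)"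
  proof -
    have "(\<Sum>i\<in>{3..r}. \<Sum>j\<in>{3..r}. f i j)
        = (\<Sum>i\<in>{3..r}. f i i + (\<Sum>j\<in>{3..r}. if i = j then 0 else f i j))"
      by (rule sum.cong[OF refl]) (rule diag)
    then show ?thesis by (simp add: sum.distrib)
  qed
  have "(\<Sum>i\<in>{1..r}. \<Sum>j\<in>{1..r}. f i j) = (\<Sum>i\<in>{1..r}. f i 1 + f i 2 + (\<Sum>j\<in>{3..r}. f i j))"
    by (rule sum.cong[OF refl], rule split)
  also have "\<dots> = (f 1 1 + f 1 2 + (\<Sum>j\<in>{3..r}. f 1 j)) + (f 2 1 + f 2 2 + (\<Sum>j\<in>{3..r}. f 2 j))
      + (\<Sum>i\<in>{3..r}. f i 1 + f i 2 + (\<Sum>j\<in>{3..r}. f i j))"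
    by (rule split)
  also have "(\<Sum>i\<in>{3..r}. f i 1 + f i 2 + (\<Sum>j\<in>{3..r}. f i j))
      = (\<Sum>j\<in>{3..r}. f 1 j + f 2 j) + (\<Sum>i\<in>{3..r}. \<Sum>j\<in>{3..r}. f i j)"
    using sym by (simp add: sum.distrib)
  moreover have "f 2 1 = f 1 2" using sym r by simp
  ultimately show ?thesis by (simp add: off_diag sum.distrib algebra_simps)
qed

lemma sum_merge_first_two:
  fixes g :: "nat \<Rightarrow> 'a::comm_monoid_add"
  assumes "2 \<le> r"
  shows "(\<Sum>i\<in>{2..r}. if i = 2 then g 1 + g 2 else g i) = (\<Sum>i\<in>{1..r}. g i)"
proof -
  have "{2..r} = insert 2 {3..r}" and "{1..r} = insert 1 (insert 2 {3..r})" using assms by auto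
  then show ?thesis by (simp add: add.assoc)
qed

text \<open>For \<open>t i j = T (V i) (V j)\<close> this is \<open>2 (\<tau> - K - bound)\<close>, see \<open>chen_identity\<close>.\<close>

definition chen_deficit :: "(nat \<Rightarrow> nat \<Rightarrow> 'a::real_inner) \<Rightarrow> nat \<Rightarrow> real" where
  "chen_deficit t r = (\<Sum>i\<in>{1..r}. \<Sum>j\<in>{1..r}. (norm (t i j))\<^sup>2)
     + 2 * (inner (t 1 1) (t 2 2) - (norm (t 1 2))\<^sup>2) - (norm (\<Sum>i\<in>{1..r}. t i i))\<^sup>2 / (real r - 1)"

text \<open>Condition (E) stated for the vectors \<open>t i j\<close> rather than for their horizontal components.\<close>

definition chen_extremal :: "(nat \<Rightarrow> nat \<Rightarrow> 'a::real_vector) \<Rightarrow> nat \<Rightarrow> bool" where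
  "chen_extremal t r \<longleftrightarrow> (\<forall>j\<in>{3..r}. t 1 j = 0 \<and> t 2 j = 0)
     \<and> (\<forall>i\<in>{3..r}. \<forall>j\<in>{3..r}. i \<noteq> j \<longrightarrow> t i j = 0)
     \<and> (\<forall>j\<in>{3..r}. t 1 1 + t 2 2 = t j j)"

lemma sum_diag_eq_if_diag_eq:
  fixes t :: "nat \<Rightarrow> nat \<Rightarrow> 'a::real_vector"
  assumes diag: "\<forall>j\<in>{3..r}. t 1 1 + t 2 2 = t j j" and r: "2 \<le> r"
  shows "(\<Sum>i\<in>{1..r}. t i i) = (real r - 1) *\<^sub>R (t 1 1 + t 2 2)"
proof -
  have "(\<Sum>i\<in>{1..r}. t i i) = (\<Sum>i\<in>{2..r}. if i = 2 then t 1 1 + t 2 2 else t i i)"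
    using r by (intro sum_merge_first_two[symmetric])
  also have "\<dots> = (\<Sum>i\<in>{2..r}. t 1 1 + t 2 2)"
  proof (rule sum.cong[OF refl])
    fix i assume "i \<in> {2..r}"
    then have "i = 2 \<or> i \<in> {3..r}" by auto
    then show "(if i = 2 then t 1 1 + t 2 2 else t i i) = t 1 1 + t 2 2" using diag by auto
  qed
  also have "\<dots> = (real r - 1) *\<^sub>R (t 1 1 + t 2 2)"
    using r by (simp add: sum_constant_scaleR of_nat_diff)
  finally show ?thesis .
qed

lemma chen_deficit_sum_of_squares:
  fixes t :: "nat \<Rightarrow> nat \<Rightarrow> 'a::real_inner"
  assumes r: "r > 2" and sym: "\<forall>i\<in>{1..r}. \<forall>j\<in>{1..r}. t i j = t j i"
  defines "y \<equiv> \<lambda>i. if i = 2 then t 1 1 + t 2 2 else t i i"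
  shows "chen_deficit t r
    = (\<Sum>i\<in>{2..r}. (norm (y i - (1 / (real r - 1)) *\<^sub>R (\<Sum>j\<in>{1..r}. t j j)))\<^sup>2)
      + 2 * (\<Sum>j\<in>{3..r}. (norm (t 1 j))\<^sup>2 + (norm (t 2 j))\<^sup>2)
      + (\<Sum>i\<in>{3..r}. \<Sum>j\<in>{3..r}. if i = j then 0 else (norm (t i j))\<^sup>2)"
proof -
  have two: "{2..r} = insert 2 {3..r}" using r by auto
  have card: "real (card {2..r}) = real r - 1" using r by (simp add: of_nat_diff)
  have trace: "(\<Sum>j\<in>{2..r}. y j) = (\<Sum>i\<in>{1..r}. t i i)"
    unfolding y_def using r by (intro sum_merge_first_two) simp
  have mean: "(\<Sum>i\<in>{2..r}. (norm (y i - (1 / (real r - 1)) *\<^sub>R (\<Sum>j\<in>{1..r}. t j j)))\<^sup>2)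
      = (\<Sum>i\<in>{2..r}. (norm (y i))\<^sup>2) - (norm (\<Sum>j\<in>{1..r}. t j j))\<^sup>2 / (real r - 1)"
    using sum_norm_power2_deviation_mean[where I="{2..r}" and x=y] unfolding card trace by simp
  have "(\<Sum>i\<in>{2..r}. (norm (y i))\<^sup>2)
      = (norm (t 1 1))\<^sup>2 + (norm (t 2 2))\<^sup>2 + 2 * inner (t 1 1) (t 2 2) + (\<Sum>i\<in>{3..r}. (norm (t i i))\<^sup>2)"
    by (simp add: two y_def power2_norm_eq_inner inner_add_left inner_add_right inner_commute)
  moreover have "(\<Sum>i\<in>{1..r}. \<Sum>j\<in>{1..r}. (norm (t i j))\<^sup>2)
    = (norm (t 1 1))\<^sup>2 + (norm (t 2 2))\<^sup>2 + 2 * (norm (t 1 2))\<^sup>2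
      + 2 * (\<Sum>j\<in>{3..r}. (norm (t 1 j))\<^sup>2 + (norm (t 2 j))\<^sup>2)
      + (\<Sum>i\<in>{3..r}. (norm (t i i))\<^sup>2)
      + (\<Sum>i\<in>{3..r}. \<Sum>j\<in>{3..r}. if i = j then 0 else (norm (t i j))\<^sup>2)"
    using r sym by (intro sum_square_symmetric_split) auto
  ultimately show ?thesis
    unfolding chen_deficit_def mean by (simp add: algebra_simps)
qed

lemma chen_deficit_nonneg:
  fixes t :: "nat \<Rightarrow> nat \<Rightarrow> 'a::real_inner"
  assumes "r > 2" and "\<forall>i\<in>{1..r}. \<forall>j\<in>{1..r}. t i j = t j i"
  shows "chen_deficit t r \<ge> 0"
  unfolding chen_deficit_sum_of_squares[OF assms] by (intro add_nonneg_nonneg mult_nonneg_nonneg sum_nonneg) auto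

lemma chen_deficit_eq_0_iff:
  fixes t :: "nat \<Rightarrow> nat \<Rightarrow> 'a::real_inner"
  assumes r: "r > 2" and sym: "\<forall>i\<in>{1..r}. \<forall>j\<in>{1..r}. t i j = t j i"
  shows "chen_deficit t r = 0 \<longleftrightarrow> chen_extremal t r"
proof -
  define y where "y = (\<lambda>i. if i = 2 then t 1 1 + t 2 2 else t i i)"
  define mean where "mean = (1 / (real r - 1)) *\<^sub>R (\<Sum>j\<in>{1..r}. t j j)"
  have "chen_deficit t r = 0 \<longleftrightarrow> (\<forall>i\<in>{2..r}. y i = mean)
      \<and> (\<forall>j\<in>{3..r}. t 1 j = 0 \<and> t 2 j = 0)
      \<and> (\<forall>i\<in>{3..r}. \<forall>j\<in>{3..r}. i \<noteq> j \<longrightarrow> t i j = 0)"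
    unfolding chen_deficit_sum_of_squares[OF r sym] mean_def[symmetric]
    by (simp add: y_def add_nonneg_eq_0_iff sum_nonneg sum_nonneg_eq_0_iff)
  also have "(\<forall>i\<in>{2..r}. y i = mean) \<longleftrightarrow> (\<forall>j\<in>{3..r}. t 1 1 + t 2 2 = t j j)"
  proof
    assume "\<forall>i\<in>{2..r}. y i = mean"
    then have "y 2 = mean" and "\<forall>j\<in>{3..r}. y j = mean" using r by auto
    then show "\<forall>j\<in>{3..r}. t 1 1 + t 2 2 = t j j" by (simp add: y_def)
  next
    assume diag: "\<forall>j\<in>{3..r}. t 1 1 + t 2 2 = t j j"
    have y: "\<forall>i\<in>{2..r}. y i = t 1 1 + t 2 2"
    proof
      fix i assume "i \<in> {2..r}"
      then have "i = 2 \<or> i \<in> {3..r}" by auto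
      then show "y i = t 1 1 + t 2 2" using diag by (auto simp: y_def)
    qed
    have "mean = t 1 1 + t 2 2"
      using sum_diag_eq_if_diag_eq[of r t, OF diag] r by (simp add: mean_def)
    then show "\<forall>i\<in>{2..r}. y i = mean" using y by simp
  qed
  finally show ?thesis by (auto simp: chen_extremal_def)
qed

section \<open>Fibres of a submersion from a complex space form\<close>

text \<open>On vertical vectors, O'Neill's tensor T is the second fundamental form of the fibres.\<close>

locale fibre_second_fundamental_form =
  fixes Vs :: "'a::euclidean_space set" and T :: "'a \<Rightarrow> 'a \<Rightarrow> 'a"
  assumes subspace_Vs: "subspace Vs" and bilinear_T: "bilinear T"
    and T_vertical: "\<forall>U\<in>Vs. \<forall>W\<in>Vs. T U W \<in> orthogonal_comp Vs \<and> T U W = T W U"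
begin

lemma T_in_orthogonal_comp: "U \<in> Vs \<Longrightarrow> W \<in> Vs \<Longrightarrow> T U W \<in> orthogonal_comp Vs"
  using T_vertical by blast

lemma T_commute: "U \<in> Vs \<Longrightarrow> W \<in> Vs \<Longrightarrow> T U W = T W U"
  using T_vertical by blast

lemma T_onb_commute: "onb V r Vs \<Longrightarrow> \<forall>i\<in>{1..r}. \<forall>j\<in>{1..r}. T (V i) (V j) = T (V j) (V i)"
  using T_commute onb_in by blast

lemma sum_norm_power2_T_onb_eq:
  assumes W: "onb W r Vs" and V: "onb V r Vs"
  shows "(\<Sum>i\<in>{1..r}. \<Sum>j\<in>{1..r}. (norm (T (W i) (W j)))\<^sup>2)
    = (\<Sum>i\<in>{1..r}. \<Sum>j\<in>{1..r}. (norm (T (V i) (V j)))\<^sup>2)"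
proof -
  have lin: "linear (T x)" "linear (\<lambda>y. T y x)" for x
    using bilinear_T by (simp_all add: bilinear_def)
  have "(\<Sum>i\<in>{1..r}. \<Sum>j\<in>{1..r}. (norm (T (W i) (W j)))\<^sup>2)
      = (\<Sum>i\<in>{1..r}. \<Sum>j\<in>{1..r}. (norm (T (W i) (V j)))\<^sup>2)"
    by (intro sum.cong refl sum_norm_power2_linear_onb_eq[OF W V lin(1)])
  also have "\<dots> = (\<Sum>j\<in>{1..r}. \<Sum>i\<in>{1..r}. (norm (T (W i) (V j)))\<^sup>2)"
    by (rule sum.swap)
  also have "\<dots> = (\<Sum>j\<in>{1..r}. \<Sum>i\<in>{1..r}. (norm (T (V i) (V j)))\<^sup>2)"
    by (intro sum.cong refl sum_norm_power2_linear_onb_eq[OF W V lin(2)])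
  also have "\<dots> = (\<Sum>i\<in>{1..r}. \<Sum>j\<in>{1..r}. (norm (T (V i) (V j)))\<^sup>2)"
    by (rule sum.swap)
  finally show ?thesis .
qed

lemma chen_deficit_onb_eq:
  assumes W: "onb W r Vs" and V: "onb V r Vs" and r: "2 \<le> r"
    and plane: "span {W 1, W 2} = span {V 1, V 2}"
  shows "chen_deficit (\<lambda>i j. T (W i) (W j)) r = chen_deficit (\<lambda>i j. T (V i) (V j)) r"
proof -
  have two: "{1..2::nat} = {1, 2}" by auto
  have V_in: "V 1 \<in> Vs" "V 2 \<in> Vs" using onb_in[OF V] r by auto
  have "onb W 2 (span {V 1, V 2})" "onb V 2 (span {V 1, V 2})"
    using onb_restrict[OF W r] onb_restrict[OF V r] plane unfolding two by simp_all
  then have "gauss_term T (W 1) (W 2) = gauss_term T (V 1) (V 2)"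
    using gauss_term_onb_eq[OF bilinear_T T_commute[OF V_in]] by blast
  then show ?thesis
    unfolding chen_deficit_def gauss_term_def
    using sum_norm_power2_T_onb_eq[OF W V] sum_bilinear_diag_onb_eq[OF W V bilinear_T] by simp
qed

lemma chen_extremal_if_condE:
  assumes "condE Vs T r s Pl Hv" and r: "2 \<le> r"
  obtains W where "onb W r Vs" "span {W 1, W 2} = Pl" "chen_extremal (\<lambda>i j. T (W i) (W j)) r"
proof -
  obtain W h where W: "onb W r Vs" and h: "onb h s (orthogonal_comp Vs)" and plane: "span {W 1, W 2} = Pl"
    and c1: "\<forall>l\<in>{1..s}. \<forall>j\<in>{3..r}. inner (T (W 1) (W j)) (h l) = 0 \<and> inner (T (W 2) (W j)) (h l) = 0"
    and c2: "\<forall>i\<in>{3..r}. \<forall>j\<in>{3..r}. i \<noteq> j \<longrightarrow> inner (T (W i) (W j)) (h 1) = 0"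
    and c3: "\<forall>l\<in>{2..s}. \<forall>i\<in>{3..r}. \<forall>j\<in>{3..r}. inner (T (W i) (W j)) (h l) = 0"
    and c4: "\<forall>l\<in>{2..s}. inner (T (W 1) (W 1)) (h l) + inner (T (W 2) (W 2)) (h l) = 0"
    and c5: "\<forall>j\<in>{3..r}. inner (T (W 1) (W 1)) (h 1) + inner (T (W 2) (W 2)) (h 1)
                         = inner (T (W j) (W j)) (h 1)"
    using assms(1) unfolding condE_def Let_def by blast
  define t where "t = (\<lambda>i j. T (W i) (W j))"
  have t_perp: "t i j \<in> orthogonal_comp Vs" if "i \<in> {1..r}" "j \<in> {1..r}" for i j
    using T_in_orthogonal_comp onb_in[OF W] that by (simp add: t_def)
  have zero: "x = 0" if "x \<in> orthogonal_comp Vs" "inner x (h 1) = 0" "\<forall>l\<in>{2..s}. inner x (h l) = 0" for x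
  proof -
    have "\<forall>l\<in>{1..s}. inner x (h l) = 0"
    proof
      fix l assume "l \<in> {1..s}"
      then have "l = 1 \<or> l \<in> {2..s}" by auto
      then show "inner x (h l) = 0" using that by auto
    qed
    then show ?thesis using onb_eq_0_iff[OF h that(1)] by simp
  qed
  have ij: "i \<in> {1..r}" if "i \<in> {3..r}" for i using that by simp
  have onetwo: "1 \<in> {1..r}" "2 \<in> {1..r}" using r by auto
  have "t 1 j = 0 \<and> t 2 j = 0" if j: "j \<in> {3..r}" for j
    using onb_eq_0_iff[OF h t_perp[OF onetwo(1) ij[OF j]]] onb_eq_0_iff[OF h t_perp[OF onetwo(2) ij[OF j]]]
      c1 j by (simp add: t_def)
  moreover have "t i j = 0" if "i \<in> {3..r}" "j \<in> {3..r}" "i \<noteq> j" for i j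
    using zero[OF t_perp[OF ij ij]] c2 c3 that by (simp add: t_def)
  moreover have "t 1 1 + t 2 2 = t j j" if j: "j \<in> {3..r}" for j
  proof -
    have "t 1 1 + t 2 2 - t j j \<in> orthogonal_comp Vs"
      using t_perp onetwo ij[OF j] by (intro subspace_diff subspace_add subspace_orthogonal_comp) auto
    moreover have "inner (t 1 1 + t 2 2 - t j j) (h 1) = 0"
      using c5 j by (simp add: t_def inner_add_left inner_diff_left)
    moreover have "\<forall>l\<in>{2..s}. inner (t 1 1 + t 2 2 - t j j) (h l) = 0"
      using c3 c4 j by (simp add: t_def inner_add_left inner_diff_left)
    ultimately have "t 1 1 + t 2 2 - t j j = 0" by (rule zero)
    then show ?thesis by simp
  qed
  ultimately have "chen_extremal t r" by (simp add: chen_extremal_def)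
  then show thesis using that W plane by (simp add: t_def)
qed

lemma condE_if_chen_extremal:
  assumes V: "onb V r Vs" and r: "r > 2" and s: "s = dim (orthogonal_comp Vs)"
    and ext: "chen_extremal (\<lambda>i j. T (V i) (V j)) r"
  shows "condE Vs T r s (span {V 1, V 2}) (meancurv T V r)"
proof -
  define t where "t = (\<lambda>i j. T (V i) (V j))"
  define H where "H = meancurv T V r"
  define A where "A = t 1 1 + t 2 2"
  have t_perp: "t i j \<in> orthogonal_comp Vs" if "i \<in> {1..r}" "j \<in> {1..r}" for i j
    using T_in_orthogonal_comp onb_in[OF V] that by (simp add: t_def)
  have H_A: "H = ((real r - 1) / real r) *\<^sub>R A"
    using sum_diag_eq_if_diag_eq[of r t] ext r unfolding H_def meancurv_def A_def t_def
    by (simp add: chen_extremal_def)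
  then have A_H: "A = (real r / (real r - 1)) *\<^sub>R H" using r by simp
  have "A \<in> orthogonal_comp Vs"
    unfolding A_def using t_perp r by (intro subspace_add subspace_orthogonal_comp) auto
  then have H_perp: "H \<in> orthogonal_comp Vs"
    unfolding H_A by (intro subspace_scale subspace_orthogonal_comp)
  obtain h where h: "onb h s (orthogonal_comp Vs)" and h1: "H \<noteq> 0 \<longrightarrow> h 1 = (1 / norm H) *\<^sub>R H"
    unfolding s by (rule onb_exists_first_direction[OF subspace_orthogonal_comp H_perp])
  have A_perp: "inner A (h l) = 0" if l: "l \<in> {2..s}" for l
  proof (cases "H = 0")
    case True
    then show ?thesis using A_H by simp
  next
    case False
    then have "H = norm H *\<^sub>R h 1" using h1 by simp
    moreover have "inner (h 1) (h l) = 0" using onb_inner[OF h, of 1 l] l by auto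
    ultimately have "inner H (h l) = 0" by (metis inner_scaleR_left mult_zero_right)
    then show ?thesis using A_H by simp
  qed
  have c1: "\<forall>l\<in>{1..s}. \<forall>j\<in>{3..r}. inner (t 1 j) (h l) = 0 \<and> inner (t 2 j) (h l) = 0"
    and c2: "\<forall>i\<in>{3..r}. \<forall>j\<in>{3..r}. i \<noteq> j \<longrightarrow> inner (t i j) (h 1) = 0"
    using ext by (simp_all add: chen_extremal_def t_def)
  have c3: "\<forall>l\<in>{2..s}. \<forall>i\<in>{3..r}. \<forall>j\<in>{3..r}. inner (t i j) (h l) = 0"
  proof (intro ballI)
    fix l i j assume "l \<in> {2..s}" "i \<in> {3..r}" "j \<in> {3..r}"
    then show "inner (t i j) (h l) = 0"
      using ext A_perp by (cases "i = j") (auto simp: chen_extremal_def t_def A_def)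
  qed
  have c4: "\<forall>l\<in>{2..s}. inner (t 1 1) (h l) + inner (t 2 2) (h l) = 0"
    using A_perp by (simp add: A_def inner_add_left)
  have c5: "\<forall>j\<in>{3..r}. inner (t 1 1) (h 1) + inner (t 2 2) (h 1) = inner (t j j) (h 1)"
    using ext by (simp add: chen_extremal_def t_def flip: inner_add_left)
  show ?thesis
    unfolding condE_def Let_def H_def[symmetric]
    by (intro exI[of _ V] exI[of _ h]) (use V h h1 c1 c2 c3 c4 c5 in \<open>simp add: t_def\<close>)
qed

lemma condE_iff_chen_deficit_eq_0:
  assumes V: "onb V r Vs" and r: "r > 2" and s: "s = dim (orthogonal_comp Vs)"
  shows "condE Vs T r s (span {V 1, V 2}) (meancurv T V r)
    \<longleftrightarrow> chen_deficit (\<lambda>i j. T (V i) (V j)) r = 0"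
proof
  assume "condE Vs T r s (span {V 1, V 2}) (meancurv T V r)"
  then obtain W where W: "onb W r Vs" "span {W 1, W 2} = span {V 1, V 2}"
      and "chen_extremal (\<lambda>i j. T (W i) (W j)) r"
    using r by (elim chen_extremal_if_condE) auto
  then have "chen_deficit (\<lambda>i j. T (W i) (W j)) r = 0"
    using chen_deficit_eq_0_iff[OF r T_onb_commute[OF W(1)]] by simp
  then show "chen_deficit (\<lambda>i j. T (V i) (V j)) r = 0"
    using chen_deficit_onb_eq[OF W(1) V _ W(2)] r by simp
next
  assume "chen_deficit (\<lambda>i j. T (V i) (V j)) r = 0"
  then show "condE Vs T r s (span {V 1, V 2}) (meancurv T V r)"
    using chen_deficit_eq_0_iff[OF r T_onb_commute[OF V]] condE_if_chen_extremal[OF V r s] by simp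
qed

end

locale csf_submersion_fibre = fibre_second_fundamental_form Vs T
  for Vs :: "'a::euclidean_space set" and T +
  fixes J :: "'a \<Rightarrow> 'a" and c :: real and Rk :: "'a \<Rightarrow> 'a \<Rightarrow> 'a \<Rightarrow> 'a \<Rightarrow> real"
  assumes J_sq: "\<forall>x. J (J x) = - x" and J_isom: "\<forall>x y. inner (J x) (J y) = inner x y"
    and Gauss: "\<forall>F1\<in>Vs. \<forall>F2\<in>Vs. \<forall>F3\<in>Vs. \<forall>F4\<in>Vs.
        csf_curv c J F1 F2 F3 F4 = Rk F1 F2 F3 F4
          + inner (T F1 F4) (T F2 F3) - inner (T F2 F4) (T F1 F3)"
begin

lemma Rk_sectional:
  assumes "x \<in> Vs" "y \<in> Vs"
  shows "Rk x y y x = csf_curv c J x y y x - gauss_term T x y"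
  using Gauss assms T_commute[OF assms] by (simp add: gauss_term_def power2_norm_eq_inner)

lemma Rk_sectional_onb:
  assumes V: "onb V r Vs" and ij: "i \<in> {1..r}" "j \<in> {1..r}"
  shows "Rk (V i) (V j) (V j) (V i)
    = c/4 * (if i = j then 0 else 1) + 3*c/4 * (inner (V i) (J (V j)))\<^sup>2 - gauss_term T (V i) (V j)"
  using Rk_sectional[OF onb_in[OF V ij(1)] onb_in[OF V ij(2)]] csf_curv_sectional[OF J_sq J_isom]
    onb_inner[OF V ij] onb_inner[OF V ij(1) ij(1)] onb_inner[OF V ij(2) ij(2)]
  by simp

lemma scalar_curvature_onb:
  assumes V: "onb V r Vs"
  shows "(\<Sum>i\<in>{1..r}. \<Sum>j\<in>{1..r}. Rk (V i) (V j) (V j) (V i))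
    = c/4 * ((real r)\<^sup>2 - real r)
      + 3*c/4 * (\<Sum>i\<in>{1..r}. \<Sum>j\<in>{1..r}. (inner (vpart Vs (J (V i))) (V j))\<^sup>2)
      - (\<Sum>i\<in>{1..r}. \<Sum>j\<in>{1..r}. gauss_term T (V i) (V j))"
proof -
  have count: "(\<Sum>i\<in>{1..r}. \<Sum>j\<in>{1..r}. if i = j then 0 else 1 :: real) = (real r)\<^sup>2 - real r"
  proof -
    have "(\<Sum>j\<in>{1..r}. if i = j then 0 else 1 :: real) = real r - 1" if "i \<in> {1..r}" for i
    proof -
      have "(\<Sum>j\<in>{1..r}. if i = j then 0 else 1 :: real) = (\<Sum>j\<in>{1..r}. 1 - (if i = j then 1 else 0))"
        by (intro sum.cong) auto
      then show ?thesis using that by (simp add: sum_subtractf)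
    qed
    then have "(\<Sum>i\<in>{1..r}. \<Sum>j\<in>{1..r}. if i = j then 0 else 1 :: real) = (\<Sum>i\<in>{1..r}. real r - 1)"
      by (intro sum.cong refl)
    then show ?thesis by (simp add: power2_eq_square algebra_simps)
  qed
  have swap: "(\<Sum>i\<in>{1..r}. \<Sum>j\<in>{1..r}. (inner (V i) (J (V j)))\<^sup>2)
      = (\<Sum>i\<in>{1..r}. \<Sum>j\<in>{1..r}. (inner (vpart Vs (J (V i))) (V j))\<^sup>2)"
    using inner_vpart[OF subspace_Vs onb_in[OF V]]
    by (subst sum.swap) (simp add: inner_commute)
  have "(\<Sum>i\<in>{1..r}. \<Sum>j\<in>{1..r}. Rk (V i) (V j) (V j) (V i))
      = (\<Sum>i\<in>{1..r}. \<Sum>j\<in>{1..r}. c/4 * (if i = j then 0 else 1)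
           + 3*c/4 * (inner (V i) (J (V j)))\<^sup>2 - gauss_term T (V i) (V j))"
    by (intro sum.cong refl Rk_sectional_onb[OF V])
  also have "\<dots> = c/4 * (\<Sum>i\<in>{1..r}. \<Sum>j\<in>{1..r}. if i = j then 0 else 1)
      + 3*c/4 * (\<Sum>i\<in>{1..r}. \<Sum>j\<in>{1..r}. (inner (V i) (J (V j)))\<^sup>2)
      - (\<Sum>i\<in>{1..r}. \<Sum>j\<in>{1..r}. gauss_term T (V i) (V j))"
    by (simp add: sum.distrib sum_subtractf sum_distrib_left)
  finally show ?thesis unfolding count swap .
qed

lemma chen_identity:
  assumes V: "onb V r Vs" and r: "r > 2"
  shows "(1/2) * (\<Sum>i\<in>{1..r}. \<Sum>j\<in>{1..r}. Rk (V i) (V j) (V j) (V i)) - Rk (V 1) (V 2) (V 2) (V 1)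
    = (1/2) * ((c/4) * ((real r)\<^sup>2 - real r - 2)
        + (3*c/4) * ((\<Sum>i\<in>{1..r}. \<Sum>j\<in>{1..r}. (inner (vpart Vs (J (V i))) (V j))\<^sup>2)
                     - 2 * (inner (V 1) (vpart Vs (J (V 2))))\<^sup>2)
        - ((real r)\<^sup>2 * (real r - 2) / (real r - 1)) * (norm (meancurv T V r))\<^sup>2)
      + chen_deficit (\<lambda>i j. T (V i) (V j)) r / 2"
proof -
  define S where "S = (\<Sum>i\<in>{1..r}. T (V i) (V i))"
  define N where "N = (\<Sum>i\<in>{1..r}. \<Sum>j\<in>{1..r}. (norm (T (V i) (V j)))\<^sup>2)"
  have onetwo: "1 \<in> {1..r}" "2 \<in> {1..r}" using r by auto
  have rr: "real r > 2" using r by simp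
  have g: "inner (V 1) (vpart Vs (J (V 2))) = inner (V 1) (J (V 2))"
    using inner_vpart[OF subspace_Vs onb_in[OF V onetwo(1)], of "J (V 2)"] by (metis inner_commute)
  define X where "X = (norm S)\<^sup>2 / (real r - 1)"
  have H: "((real r)\<^sup>2 * (real r - 2) / (real r - 1)) * (norm (meancurv T V r))\<^sup>2 = (norm S)\<^sup>2 - X"
    using rr by (simp add: meancurv_def S_def X_def power_divide field_simps)
  have D: "chen_deficit (\<lambda>i j. T (V i) (V j)) r = N + 2 * gauss_term T (V 1) (V 2) - X"
    by (simp add: chen_deficit_def gauss_term_def N_def S_def X_def)
  have G: "(\<Sum>i\<in>{1..r}. \<Sum>j\<in>{1..r}. gauss_term T (V i) (V j)) = (norm S)\<^sup>2 - N"
    unfolding S_def N_def by (rule sum_gauss_term)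
  show ?thesis
    unfolding scalar_curvature_onb[OF V] Rk_sectional_onb[OF V onetwo] g H D G
    by (simp add: algebra_simps) (simp add: field_simps)
qed

end

theorem mainTheorem4:
  fixes J :: "'a::euclidean_space \<Rightarrow> 'a" and c :: real and Vs Pl :: "'a set"
    and T :: "'a \<Rightarrow> 'a \<Rightarrow> 'a" and Rk :: "'a \<Rightarrow> 'a \<Rightarrow> 'a \<Rightarrow> 'a \<Rightarrow> real"
    and r s :: nat and V h :: "nat \<Rightarrow> 'a"
  assumes J_lin: "linear J"
    and J_sq: "\<forall>x. J (J x) = - x"
    and J_isom: "\<forall>x y. inner (J x) (J y) = inner x y"
    and Vs_sub: "subspace Vs"
    and r_def: "r = dim Vs"
    and s_def: "s = dim (orthogonal_comp Vs)"
    and r_gt: "r > 2"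
    and T_bil: "bilinear T"
    and T_vert: "\<forall>U\<in>Vs. \<forall>W\<in>Vs. T U W \<in> orthogonal_comp Vs \<and> T U W = T W U"
    and Gauss: "\<forall>F1\<in>Vs. \<forall>F2\<in>Vs. \<forall>F3\<in>Vs. \<forall>F4\<in>Vs.
        csf_curv c J F1 F2 F3 F4 = Rk F1 F2 F3 F4
          + inner (T F1 F4) (T F2 F3) - inner (T F2 F4) (T F1 F3)"
    and V_onb: "onb V r Vs"
    and h_onb: "onb h s (orthogonal_comp Vs)"
    and Pi_def: "Pl = span {V 1, V 2}"
  shows "let Hv = meancurv T V r;
             Q2 = (\<Sum>i\<in>{1..r}. \<Sum>j\<in>{1..r}. (inner (vpart Vs (J (V i))) (V j))\<^sup>2);
             tau = (1/2) * (\<Sum>i\<in>{1..r}. \<Sum>j\<in>{1..r}. Rk (V i) (V j) (V j) (V i));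
             K = Rk (V 1) (V 2) (V 2) (V 1);
             rr = real r;
             bound = (1/2) * ((c/4) * (rr\<^sup>2 - rr - 2)
                       + (3*c/4) * (Q2 - 2 * (inner (V 1) (vpart Vs (J (V 2))))\<^sup>2)
                       - (rr\<^sup>2 * (rr - 2) / (rr - 1)) * (norm Hv)\<^sup>2)
         in tau - K \<ge> bound \<and> (tau - K = bound \<longleftrightarrow> condE Vs T r s Pl Hv)"
proof -
  interpret csf_submersion_fibre Vs T J c Rk
    using Vs_sub T_bil T_vert J_sq J_isom Gauss by unfold_locales
  have key: "b \<le> x \<and> (x = b \<longleftrightarrow> condE Vs T r s Pl (meancurv T V r))"
    if "x = b + chen_deficit (\<lambda>i j. T (V i) (V j)) r / 2" for x b
    using that chen_deficit_nonneg[OF r_gt T_onb_commute[OF V_onb]]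
      condE_iff_chen_deficit_eq_0[OF V_onb r_gt s_def] Pi_def by auto
  show ?thesis
    unfolding Let_def by (rule key[OF chen_identity[OF V_onb r_gt]])
qed

end
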